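(* Let $H$ be a graph and $k\ge2$, and suppose $G=\mathsf{TJ}_k(H)$ is triangle-free. Then every vertex of $G$ has degree at most $k$; in particular $\Delta(G)\le k$.
   Context: All graphs are finite, simple, undirected; $\Delta(G)$ is the maximum degree. A $k$-clique of a graph $H$ is a set of $k$ pairwise adjacent vertices. For a graph $H$ and integer $k\ge1$, the Token Jumping graph $\mathsf{TJ}_k(H)$ has as vertices the $k$-cliques of $H$, and two $k$-cliques $A,B$ are adjacent iff $|A\cap B|=k-1$. *)

theory Defs
  imports Main
begin

text \<open>A finite simple undirected graph: finite vertex set V and a symmetric,
irreflexive adjacency relation E (only its restriction to V matters).\<close>

definition simple_graph :: "'a set \<Rightarrow> ('a \<Rightarrow> 'a \<Rightarrow> bool) \<Rightarrow> bool" where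
  "simple_graph V E \<longleftrightarrow> finite V \<and> (\<forall>x y. E x y \<longrightarrow> E y x) \<and> (\<forall>x. \<not> E x x)"

definition is_clique :: "'a set \<Rightarrow> ('a \<Rightarrow> 'a \<Rightarrow> bool) \<Rightarrow> nat \<Rightarrow> 'a set \<Rightarrow> bool" where
  "is_clique V E k A \<longleftrightarrow> A \<subseteq> V \<and> finite A \<and> card A = k \<and>
     (\<forall>x\<in>A. \<forall>y\<in>A. x \<noteq> y \<longrightarrow> E x y)"

definition TJ_vertices :: "'a set \<Rightarrow> ('a \<Rightarrow> 'a \<Rightarrow> bool) \<Rightarrow> nat \<Rightarrow> 'a set set" where
  "TJ_vertices V E k = {A. is_clique V E k A}"

definition TJ_adj :: "nat \<Rightarrow> 'a set \<Rightarrow> 'a set \<Rightarrow> bool" where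
  "TJ_adj k A B \<longleftrightarrow> card (A \<inter> B) = k - 1"

definition triangle_free :: "'b set \<Rightarrow> ('b \<Rightarrow> 'b \<Rightarrow> bool) \<Rightarrow> bool" where
  "triangle_free W F \<longleftrightarrow>
     \<not> (\<exists>a\<in>W. \<exists>b\<in>W. \<exists>c\<in>W. F a b \<and> F b c \<and> F a c)"

definition degree :: "'b set \<Rightarrow> ('b \<Rightarrow> 'b \<Rightarrow> bool) \<Rightarrow> 'b \<Rightarrow> nat" where
  "degree W F v = card {u\<in>W. F v u}"

end

theory Submission
  imports Defs
begin

text \<open>A neighbour B of the k-clique A in the Token Jumping graph misses exactly one
vertex of A. Two distinct neighbours missing the same vertex a both contain A - {a},
so they share k - 1 vertices and are adjacent to each other, forming a triangle with A.
Hence in the triangle-free case B \<mapsto> A - B is injective on the neighbourhood of A,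
with values among the k singletons of A.\<close>

lemma triangle_free_neighbours_not_adjacent:
  assumes "triangle_free W F" "a \<in> W" "b \<in> W" "c \<in> W" "F a b" "F a c"
  shows "\<not> F b c"
  using assms unfolding triangle_free_def by blast

lemma card_Diff_eq_1_if_card_Int_eq_pred:
  assumes "finite A" "A \<noteq> {}" "card (A \<inter> B) = card A - 1"
  shows "\<exists>a\<in>A. A - B = {a}"
proof -
  have "card (A - B) = 1"
    using assms card_Diff_subset_Int[of A B] card_gt_0_iff[of A]
    by (simp add: Diff_Int2[symmetric])
  then obtain a where "A - B = {a}" by (rule card_1_singletonE)
  then show ?thesis by blast
qed

lemma card_Int_eq_pred_if_same_Diff:
  assumes fin: "finite B\<^sub>1" "finite B\<^sub>2"
    and card: "card B\<^sub>1 = k" "card B\<^sub>2 = k" "card (A \<inter> B\<^sub>1) = k - 1"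
    and same_Diff: "A - B\<^sub>1 = A - B\<^sub>2"
    and distinct: "B\<^sub>1 \<noteq> B\<^sub>2"
  shows "card (B\<^sub>1 \<inter> B\<^sub>2) = k - 1"
proof -
  have "A \<inter> B\<^sub>1 \<subseteq> B\<^sub>1 \<inter> B\<^sub>2"
    using same_Diff by blast
  then have "k - 1 \<le> card (B\<^sub>1 \<inter> B\<^sub>2)"
    using card_mono fin card by (metis finite_Int)
  moreover have "\<not> B\<^sub>1 \<subseteq> B\<^sub>2"
    using card_subset_eq fin card distinct by metis
  then have "card (B\<^sub>1 \<inter> B\<^sub>2) < k"
    using psubset_card_mono[of B\<^sub>1 "B\<^sub>1 \<inter> B\<^sub>2"] fin card by blast
  ultimately show ?thesis by linarith
qed

lemma TJ_vertex_card:
  assumes "B \<in> TJ_vertices V E k"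
  shows "finite B" "card B = k"
  using assms by (auto simp: TJ_vertices_def is_clique_def)

lemma TJ_neighbour_Diff_singleton:
  assumes A: "A \<in> TJ_vertices V E k" and "k > 0" and "TJ_adj k A B"
  shows "\<exists>a\<in>A. A - B = {a}"
proof (rule card_Diff_eq_1_if_card_Int_eq_pred)
  show "finite A" "A \<noteq> {}"
    using TJ_vertex_card[OF A] \<open>k > 0\<close> by auto
  show "card (A \<inter> B) = card A - 1"
    using TJ_vertex_card(2)[OF A] \<open>TJ_adj k A B\<close> by (simp add: TJ_adj_def)
qed

lemma inj_on_Diff_TJ_neighbours:
  assumes triangle_free: "triangle_free (TJ_vertices V E k) (TJ_adj k)"
    and A: "A \<in> TJ_vertices V E k"
  shows "inj_on (\<lambda>B. A - B) {B \<in> TJ_vertices V E k. TJ_adj k A B}"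
proof (rule inj_onI, rule ccontr)
  fix B\<^sub>1 B\<^sub>2
  assume B\<^sub>1: "B\<^sub>1 \<in> {B \<in> TJ_vertices V E k. TJ_adj k A B}"
    and B\<^sub>2: "B\<^sub>2 \<in> {B \<in> TJ_vertices V E k. TJ_adj k A B}"
    and same_Diff: "A - B\<^sub>1 = A - B\<^sub>2" and distinct: "B\<^sub>1 \<noteq> B\<^sub>2"
  have B\<^sub>1_vertex: "B\<^sub>1 \<in> TJ_vertices V E k" and B\<^sub>2_vertex: "B\<^sub>2 \<in> TJ_vertices V E k"
    and "card (A \<inter> B\<^sub>1) = k - 1"
    using B\<^sub>1 B\<^sub>2 by (simp_all add: TJ_adj_def)
  then have "card (B\<^sub>1 \<inter> B\<^sub>2) = k - 1"
    using card_Int_eq_pred_if_same_Diff[OF TJ_vertex_card(1)[OF B\<^sub>1_vertex]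
        TJ_vertex_card(1)[OF B\<^sub>2_vertex] TJ_vertex_card(2)[OF B\<^sub>1_vertex]
        TJ_vertex_card(2)[OF B\<^sub>2_vertex] _ same_Diff distinct]
    by blast
  then have "TJ_adj k B\<^sub>1 B\<^sub>2"
    by (simp add: TJ_adj_def)
  with B\<^sub>1 B\<^sub>2 show False
    using triangle_free_neighbours_not_adjacent[OF triangle_free A] by blast
qed

lemma card_le_if_inj_on_into_singletons:
  assumes "finite A" "inj_on f N" "f ` N \<subseteq> (\<lambda>a. {a}) ` A"
  shows "card N \<le> card A"
proof -
  have "card N = card (f ` N)"
    using assms(2) by (simp add: card_image)
  also have "\<dots> \<le> card ((\<lambda>a. {a}) ` A)"
    using assms(1,3) by (simp add: card_mono)
  also have "\<dots> \<le> card A"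
    using assms(1) by (rule card_image_le)
  finally show ?thesis .
qed

theorem lemma4p5:
  fixes V :: "'a set" and E :: "'a \<Rightarrow> 'a \<Rightarrow> bool" and k :: nat
  assumes "simple_graph V E"
    and "k \<ge> 2"
    and "triangle_free (TJ_vertices V E k) (TJ_adj k)"
  shows "\<forall>A\<in>TJ_vertices V E k. degree (TJ_vertices V E k) (TJ_adj k) A \<le> k"
proof
  fix A assume A: "A \<in> TJ_vertices V E k"
  let ?N = "{B \<in> TJ_vertices V E k. TJ_adj k A B}"
  have "(\<lambda>B. A - B) ` ?N \<subseteq> (\<lambda>a. {a}) ` A"
    using TJ_neighbour_Diff_singleton[OF A] assms(2) by fastforce
  then have "card ?N \<le> card A"
    by (rule card_le_if_inj_on_into_singletons[OF TJ_vertex_card(1)[OF A]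
          inj_on_Diff_TJ_neighbours[OF assms(3) A]])
  then show "degree (TJ_vertices V E k) (TJ_adj k) A \<le> k"
    using TJ_vertex_card(2)[OF A] by (simp add: degree_def)
qed

end
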